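(* Let $n$ be a positive integer. Then: (1) For any symmetric bilinear form $S\in \mathcal{S}_n(k)$ there exist units $u_1, \dots, u_n \in k^\times$ such that $S$ is naively homotopic to the diagonal form $\langle u_1,\dots,u_n \rangle$. (2) For any pointed rational function $f\in \mathcal{F}_n(k)$ there exist units $u_1, \dots, u_n \in k^\times$ such that $f$ and $[u_1,\dots,u_n]$ are in the same pointed naive homotopy class.
   Context: Let $k$ be a field. $\mathcal{S}_n$ is the scheme of non-degenerate $n\times n$ symmetric matrices; two elements of $\mathcal{S}_n(k)$ are naively homotopic if they are linked by a finite chain of elements of $\mathcal{S}_n(k[T])$ evaluated at $T=0$ and $T=1$. $\mathcal{F}_n(k)$ is the set of pointed degree $n$ rational functions $\frac AB$ ($A\in k[X]$ monic of degree $n$, $\deg B<n$, $\mathrm{res}_{n,n}(A,B)\neq0$); pointed naive homotopy is the equivalence relation generated by elements of $\mathcal{F}_n(k[T])$ evaluated at $T=0,1$. $\langle u_1,\dots,u_n\rangle$ denotes the diagonal form $\langle u_1\rangle\oplus\dots\oplus\langle u_n\rangle\in\mathcal{S}_n(k)$, and $[u_1,\dots,u_n]$ denotes the rational function $\frac{X}{u_1}\oplus^{\mathrm{N}}\dots\oplus^{\mathrm{N}}\frac{X}{u_n}\in\mathcal{F}_n(k)$, where $\oplus^{\mathrm{N}}$ is defined by: if $A_iU_i+B_iV_i=1$ are Bézout relations ($\deg U_i\leq n_i-2$, $\deg V_i\leq n_i-1$), then $\frac{A_1}{B_1}\oplus^{\mathrm{N}}\frac{A_2}{B_2}=\frac{A_3}{B_3}$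 with $\begin{bmatrix}A_3 & -V_3\\ B_3 & U_3\end{bmatrix} = \begin{bmatrix}A_1 & -V_1\\ B_1 & U_1\end{bmatrix}\begin{bmatrix}A_2 & -V_2\\ B_2 & U_2\end{bmatrix}$. *)

theory Defs
  imports "Jordan_Normal_Form.Determinant" "Subresultants.Resultant_Prelim"
begin

definition sym_nondeg :: "nat \<Rightarrow> 'r::comm_ring_1 mat set" where
  "sym_nondeg n = {M. M \<in> carrier_mat n n \<and> transpose_mat M = M \<and> det M dvd 1}"

definition eval_mat :: "'a::comm_ring_1 poly mat \<Rightarrow> 'a \<Rightarrow> 'a mat" where
  "eval_mat M t = map_mat (\<lambda>p. poly p t) M"

definition sym_elem_htpy :: "nat \<Rightarrow> 'a::field mat \<Rightarrow> 'a mat \<Rightarrow> bool" where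
  "sym_elem_htpy n S1 S2 \<longleftrightarrow> (\<exists>H \<in> sym_nondeg n. eval_mat H 0 = S1 \<and> eval_mat H 1 = S2)"

definition sym_naive_htpc :: "nat \<Rightarrow> 'a::field mat \<Rightarrow> 'a mat \<Rightarrow> bool" where
  "sym_naive_htpc n = (\<lambda>x y. sym_elem_htpy n x y \<or> sym_elem_htpy n y x)\<^sup>*\<^sup>*"

definition diag_form :: "'a::field list \<Rightarrow> 'a mat" where
  "diag_form us = mat (length us) (length us) (\<lambda>(i,j). if i = j then us ! i else 0)"

text \<open>F_n(R): pointed degree n rational functions A/B, represented as pairs (A,B),
  A monic of degree n, deg B < n, res_{n,n}(A,B) a unit of R.\<close>
definition ratfun :: "nat \<Rightarrow> ('r::comm_ring_1 poly \<times> 'r poly) set" where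
  "ratfun n = {(A,B). lead_coeff A = 1 \<and> degree A = n \<and> degree B < n
                      \<and> resultant_sub n n A B dvd 1}"

text \<open>Evaluation of an element over k[T] (polynomials in X with coefficients in k[T]) at T = t.\<close>
definition eval_ratfun :: "'a::comm_ring_1 poly poly \<times> 'a poly poly \<Rightarrow> 'a \<Rightarrow> 'a poly \<times> 'a poly" where
  "eval_ratfun f t = (map_poly (\<lambda>c. poly c t) (fst f), map_poly (\<lambda>c. poly c t) (snd f))"

definition ratfun_elem_htpy :: "nat \<Rightarrow> 'a::field poly \<times> 'a poly \<Rightarrow> 'a poly \<times> 'a poly \<Rightarrow> bool" where
  "ratfun_elem_htpy n f g \<longleftrightarrow> (\<exists>H \<in> ratfun n. eval_ratfun H 0 = f \<and> eval_ratfun H 1 = g)"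

definition ratfun_naive_htpc :: "nat \<Rightarrow> 'a::field poly \<times> 'a poly \<Rightarrow> 'a poly \<times> 'a poly \<Rightarrow> bool" where
  "ratfun_naive_htpc n = (\<lambda>x y. ratfun_elem_htpy n x y \<or> ratfun_elem_htpy n y x)\<^sup>*\<^sup>*"

text \<open>Bezout coefficients (U,V) with A U + B V = 1, deg U \<le> deg A - 2, deg V \<le> deg A - 1
  (the zero polynomial has degree -\<infinity>).\<close>
definition bezout_UV :: "'a::field poly \<Rightarrow> 'a poly \<Rightarrow> 'a poly \<times> 'a poly" where
  "bezout_UV A B = (THE (U,V). A * U + B * V = 1
       \<and> (U = 0 \<or> degree U + 2 \<le> degree A) \<and> (V = 0 \<or> degree V + 1 \<le> degree A))"

text \<open>The naive sum: first column of the product of the 2x2 matrices [[A,-V],[B,U]].\<close>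
definition oplusN :: "'a::field poly \<times> 'a poly \<Rightarrow> 'a poly \<times> 'a poly \<Rightarrow> 'a poly \<times> 'a poly" where
  "oplusN f g = (let (A1,B1) = f; (A2,B2) = g; (U1,V1) = bezout_UV A1 B1
                 in (A1 * A2 - V1 * B2, B1 * A2 + U1 * B2))"

text \<open>[u_1,...,u_n] = X/u_1 \<oplus>N ... \<oplus>N X/u_n (X/u is the pair (X, u)).\<close>
fun diag_ratfun :: "'a::field list \<Rightarrow> 'a poly \<times> 'a poly" where
  "diag_ratfun [] = (1, 0)"
| "diag_ratfun [u] = ([:0,1:], [:u:])"
| "diag_ratfun (u # us) = oplusN ([:0,1:], [:u:]) (diag_ratfun us)"

end

theory Submission
  imports Defs
begin

text \<open>Both parts split off one rank-one summand at a time. For a symmetric matrix, congruence by a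
  unipotent matrix \<open>E(w)\<close> is naively homotopic to the identity through \<open>E(T w)\<close>, so symmetric
  Gaussian elimination is available: it makes the last diagonal entry nonzero and then clears the
  last row, giving \<open>S\<^sub>0 \<oplus> \<langle>u\<rangle>\<close>. The one obstruction to elimination, a hyperbolic plane in
  characteristic 2, is removed by the homotopy \<open>S + T e\<^sub>l e\<^sub>l\<^sup>T\<close>, which does not change the
  determinant.

  For rational functions, invertibility of the resultant is equivalent to a B\'ezout relation
  \<open>A U + B V = 1\<close>, and \<open>\<oplus>\<^sup>N\<close> is multiplication by a matrix \<open>[[A, -V], [B, U]]\<close> of
  determinant 1. Deforming either factor of such a product along \<open>T\<close> is a naive homotopy. A
  Euclidean division step and two such deformations turn any \<open>A/B\<close> into one with
  \<open>deg B = n - 1\<close>, and after a shift \<open>A \<mapsto> A + c B\<close> this equals \<open>X/u \<oplus>\<^sup>N g\<close> with \<open>g\<close> of degree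
  \<open>n - 1\<close>.\<close>

lemma rtranclp_symmetric_map:
  assumes "(\<lambda>x y. R x y \<or> R y x)\<^sup>*\<^sup>* a b"
    and "\<And>x y. R x y \<Longrightarrow> Q (f x) (f y)"
  shows "(\<lambda>x y. Q x y \<or> Q y x)\<^sup>*\<^sup>* (f a) (f b)"
  using assms(1)
proof (induction rule: rtranclp_induct)
  case (step y z)
  then have "Q (f y) (f z) \<or> Q (f z) (f y)" using assms(2) by blast
  with step.IH show ?case by (rule rtranclp.rtrancl_into_rtrancl)
qed simp

lemma rtranclp_symmetric_invariant:
  assumes "(\<lambda>x y. R x y \<or> R y x)\<^sup>*\<^sup>* a b" and "P a"
    and "\<And>x y. R x y \<Longrightarrow> P x \<and> P y"
  shows "P b"
  using assms(1,2) by (induction rule: rtranclp_induct) (use assms(3) in blast)+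

lemma comm_ring_hom_const_poly: "comm_ring_hom (\<lambda>x::'a::comm_ring_1. [:x:])"
  by unfold_locales (simp_all add: one_pCons)

lemma det_const_poly_mat [simp]: "det (map_mat (\<lambda>x. [:x:]) S) = [:det S:]"
  by (rule comm_ring_hom.hom_det[OF comm_ring_hom_const_poly])

section \<open>Symmetric forms\<close>

lemma sym_naive_htpc_refl [simp]: "sym_naive_htpc n S S"
  by (simp add: sym_naive_htpc_def)

lemma sym_naive_htpc_trans [trans]:
  "sym_naive_htpc n S T \<Longrightarrow> sym_naive_htpc n T R \<Longrightarrow> sym_naive_htpc n S R"
  unfolding sym_naive_htpc_def by (rule rtranclp_trans)

lemma sym_elem_htpy_imp_naive_htpc: "sym_elem_htpy n S T \<Longrightarrow> sym_naive_htpc n S T"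
  unfolding sym_naive_htpc_def by (simp add: r_into_rtranclp)

lemma sym_nondegI:
  assumes "S \<in> carrier_mat n n" and "\<And>i j. i < n \<Longrightarrow> j < n \<Longrightarrow> S $$ (j, i) = S $$ (i, j)"
    and "det S dvd 1"
  shows "S \<in> sym_nondeg n"
proof -
  have "transpose_mat S = S" by (rule eq_matI) (use assms(1,2) in auto)
  then show ?thesis using assms unfolding sym_nondeg_def by auto
qed

lemma sym_nondegD:
  assumes "S \<in> sym_nondeg n"
  shows "S \<in> carrier_mat n n" "det S dvd 1"
    and "\<And>i j. i < n \<Longrightarrow> j < n \<Longrightarrow> S $$ (j, i) = S $$ (i, j)"
proof -
  show S: "S \<in> carrier_mat n n" "det S dvd 1" using assms by (auto simp: sym_nondeg_def)
  fix i j assume "i < n" "j < n"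
  then have "transpose_mat S $$ (i, j) = S $$ (j, i)" using S by auto
  then show "S $$ (j, i) = S $$ (i, j)" using assms by (simp add: sym_nondeg_def)
qed

lemma eval_mat_dim [simp]:
  "dim_row (eval_mat A t) = dim_row A" "dim_col (eval_mat A t) = dim_col A"
  by (simp_all add: eval_mat_def)

lemma eval_mat_carrier [simp]: "eval_mat A t \<in> carrier_mat n m \<longleftrightarrow> A \<in> carrier_mat n m"
  unfolding carrier_mat_def by simp

lemma eval_mat_index [simp]:
  "i < dim_row A \<Longrightarrow> j < dim_col A \<Longrightarrow> eval_mat A t $$ (i, j) = poly (A $$ (i, j)) t"
  by (simp add: eval_mat_def)

lemma eval_mat_mult:
  "A \<in> carrier_mat nr n \<Longrightarrow> B \<in> carrier_mat n nc \<Longrightarrow> eval_mat (A * B) t = eval_mat A t * eval_mat B t"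
  unfolding eval_mat_def by (rule semiring_hom.mat_hom_mult[OF poly_hom.semiring_hom_axioms])

lemma eval_mat_transpose: "eval_mat (transpose_mat A) t = transpose_mat (eval_mat A t)"
  by (rule eq_matI) (auto simp: eval_mat_def)

lemma det_eval_mat: "det (eval_mat A t) = poly (det A) t"
  unfolding eval_mat_def by (rule comm_ring_hom.hom_det[OF poly_hom.comm_ring_hom_axioms])

lemma eval_mat_const [simp]: "eval_mat (map_mat (\<lambda>x. [:x:]) S) t = S"
  by (rule eq_matI) (auto simp: eval_mat_def)

lemma sym_nondeg_eval_mat:
  assumes "H \<in> sym_nondeg n"
  shows "eval_mat H t \<in> sym_nondeg n"
proof (rule sym_nondegI)
  note H = sym_nondegD[OF assms]
  show "eval_mat H t \<in> carrier_mat n n" using H(1) by simp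
  show "eval_mat H t $$ (j, i) = eval_mat H t $$ (i, j)" if "i < n" "j < n" for i j
    using H(1) H(3)[OF that] that by simp
  show "det (eval_mat H t) dvd 1"
    unfolding det_eval_mat by (rule poly_hom.hom_dvd_1[OF H(2)])
qed

lemma sym_naive_htpc_sym_nondeg:
  assumes "sym_naive_htpc n S T" and "S \<in> sym_nondeg n"
  shows "T \<in> sym_nondeg n"
  using assms unfolding sym_naive_htpc_def
  by (rule rtranclp_symmetric_invariant) (auto simp: sym_elem_htpy_def sym_nondeg_eval_mat)

lemma sym_elem_htpy_congruence:
  fixes S :: "'a::field mat" and E :: "'a poly mat"
  assumes S: "S \<in> sym_nondeg n" and E: "E \<in> carrier_mat n n" "det E dvd 1"
  shows "sym_elem_htpy n (transpose_mat (eval_mat E 0) * S * eval_mat E 0)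
                         (transpose_mat (eval_mat E 1) * S * eval_mat E 1)"
proof -
  define L where "L = map_mat (\<lambda>x. [:x:]) S"
  define H where "H = transpose_mat E * L * E"
  have L: "L \<in> carrier_mat n n" "transpose_mat L = L"
    using S by (auto simp: L_def sym_nondeg_def map_mat_transpose)
  have "transpose_mat H = transpose_mat E * transpose_mat L * E"
    using E L unfolding H_def
    by (simp add: transpose_mult[of _ n n] transpose_mult[of _ n n _ n] assoc_mult_mat[of _ n n _ n _ n])
  then have "transpose_mat H = H" using L by (simp add: H_def)
  moreover have "det H = det E * [:det S:] * det E"
    using E L by (simp add: H_def L_def det_mult[of _ n] det_transpose)
  with E(2) sym_nondegD(2)[OF S] have "det H dvd 1"
    by (metis is_unit_mult_iff is_unit_const_poly_iff)
  ultimately have H: "H \<in> sym_nondeg n"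
    using E L unfolding sym_nondeg_def by (simp add: H_def)
  have "eval_mat H t = transpose_mat (eval_mat E t) * S * eval_mat E t" for t
    using E L eval_mat_mult[of "transpose_mat E * L" n n E n t] eval_mat_mult[of "transpose_mat E" n n L n t]
    by (simp add: H_def L_def eval_mat_transpose)
  with H show ?thesis unfolding sym_elem_htpy_def by (intro bexI[of _ H]) simp_all
qed

definition transvection_mat :: "nat \<Rightarrow> nat \<Rightarrow> (nat \<Rightarrow> 'r::comm_ring_1) \<Rightarrow> 'r mat" where
  "transvection_mat n p w = mat n n (\<lambda>(i, j). (if i = j then 1 else 0) + (if i = p then w j else 0))"

lemma transvection_mat_carrier [simp]: "transvection_mat n p w \<in> carrier_mat n n"
  by (simp add: transvection_mat_def)

lemma det_transvection_mat:
  assumes p: "p < n" and "w p = 0"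
  shows "det (transvection_mat n p w) = 1"
proof -
  let ?E = "transvection_mat n p w"
  have "mat_delete ?E p p = 1\<^sub>m (n - 1)"
    by (rule eq_matI) (use p in \<open>auto simp: mat_delete_def transvection_mat_def insert_index_def\<close>)
  then have "cofactor ?E p p = 1" by (simp add: cofactor_def)
  moreover have "det ?E = (\<Sum>i<n. ?E $$ (i, p) * cofactor ?E i p)"
    by (rule laplace_expansion_column[OF _ p]) simp
  moreover have "?E $$ (i, p) * cofactor ?E i p = (if i = p then cofactor ?E p p else 0)" if "i < n" for i
    using that p \<open>w p = 0\<close> by (simp add: transvection_mat_def)
  ultimately show ?thesis using p by simp
qed

lemma transvection_congruence_index:
  fixes S :: "'r::comm_ring_1 mat"
  assumes S: "S \<in> carrier_mat n n" and p: "p < n" and ij: "i < n" "j < n"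
  shows "(transpose_mat (transvection_mat n p w) * S * transvection_mat n p w) $$ (i, j)
       = S $$ (i, j) + w j * S $$ (i, p) + w i * S $$ (p, j) + w i * w j * S $$ (p, p)"
proof -
  let ?E = "transvection_mat n p w"
  have right: "(M * ?E) $$ (i, j) = M $$ (i, j) + w j * M $$ (i, p)"
    if "M \<in> carrier_mat n n" "i < n" "j < n" for M :: "'r mat" and i j
  proof -
    have "(M * ?E) $$ (i, j) = (\<Sum>k<n. M $$ (i, k) * ((if k = j then 1 else 0) + (if k = p then w j else 0)))"
      using that by (simp add: transvection_mat_def scalar_prod_def atLeast0LessThan)
    also have "\<dots> = (\<Sum>k<n. if k = j then M $$ (i, k) else 0) + (\<Sum>k<n. if k = p then M $$ (i, k) * w j else 0)"
      by (subst sum.distrib[symmetric], rule sum.cong) (auto simp: distrib_left)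
    finally show ?thesis using that p by (simp add: mult.commute)
  qed
  have left: "(transpose_mat ?E * S) $$ (i, j) = S $$ (i, j) + w i * S $$ (p, j)"
    if "i < n" "j < n" for i j
  proof -
    have "(transpose_mat ?E * S) $$ (i, j) = (\<Sum>k<n. ((if k = i then 1 else 0) + (if k = p then w i else 0)) * S $$ (k, j))"
      using that S by (simp add: transvection_mat_def scalar_prod_def atLeast0LessThan)
    also have "\<dots> = (\<Sum>k<n. if k = i then S $$ (k, j) else 0) + (\<Sum>k<n. if k = p then w i * S $$ (k, j) else 0)"
      by (subst sum.distrib[symmetric], rule sum.cong) (auto simp: distrib_right)
    finally show ?thesis using that p by simp
  qed
  have "transpose_mat ?E * S \<in> carrier_mat n n" using S by (simp add: mult_carrier_mat[of _ n n])
  from right[OF this ij] show ?thesis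
    using left[OF ij] left[OF p ij(2)] left[OF ij(1) p] left[OF p p] by (simp add: algebra_simps)
qed

text \<open>The path \<open>T \<mapsto> E(T w)\<close> of unipotent matrices joins the identity to \<open>E(w)\<close>.\<close>
lemma sym_naive_htpc_transvection:
  fixes S :: "'a::field mat"
  assumes S: "S \<in> sym_nondeg n" and p: "p < n" and "w p = 0"
  shows "sym_naive_htpc n S (transpose_mat (transvection_mat n p w) * S * transvection_mat n p w)"
proof -
  define E where "E = transvection_mat n p (\<lambda>j. [:0, w j:])"
  have "det E = 1" unfolding E_def by (rule det_transvection_mat[OF p]) (simp add: \<open>w p = 0\<close>)
  then have "sym_elem_htpy n (transpose_mat (eval_mat E 0) * S * eval_mat E 0)
                             (transpose_mat (eval_mat E 1) * S * eval_mat E 1)"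
    by (intro sym_elem_htpy_congruence[OF S]) (simp_all add: E_def)
  moreover have "eval_mat E t = transvection_mat n p (\<lambda>j. t * w j)" for t
    by (rule eq_matI) (auto simp: E_def transvection_mat_def)
  moreover have "transvection_mat n p (\<lambda>j. 0 * w j) = (1\<^sub>m n :: 'a mat)"
    by (rule eq_matI) (auto simp: transvection_mat_def)
  ultimately show ?thesis
    using sym_nondegD(1)[OF S] by (simp add: sym_elem_htpy_imp_naive_htpc)
qed

lemma det_eq_if_row_single_entry:
  fixes A B :: "'r::comm_ring_1 mat"
  assumes A: "A \<in> carrier_mat n n" and B: "B \<in> carrier_mat n n" and k: "k < n" and l: "l < n"
    and row_zero: "\<And>j. j < n \<Longrightarrow> j \<noteq> l \<Longrightarrow> A $$ (k, j) = 0"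
    and eq: "\<And>i j. i < n \<Longrightarrow> j < n \<Longrightarrow> i = k \<or> j \<noteq> l \<Longrightarrow> A $$ (i, j) = B $$ (i, j)"
  shows "det A = det B"
proof -
  have expand: "det M = M $$ (k, l) * cofactor M k l"
    if "M \<in> carrier_mat n n" "\<And>j. j < n \<Longrightarrow> j \<noteq> l \<Longrightarrow> M $$ (k, j) = 0" for M :: "'r mat"
  proof -
    have "det M = (\<Sum>j<n. M $$ (k, j) * cofactor M k j)" by (rule laplace_expansion_row[OF that(1) k])
    also have "\<dots> = (\<Sum>j<n. if j = l then M $$ (k, l) * cofactor M k l else 0)"
      by (rule sum.cong) (auto simp: that(2))
    finally show ?thesis using l by simp
  qed
  have "mat_delete A k l = mat_delete B k l"
    by (rule eq_matI) (use A B k l in \<open>auto simp: mat_delete_def intro!: eq\<close>)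
  moreover have "\<And>j. j < n \<Longrightarrow> j \<noteq> l \<Longrightarrow> B $$ (k, j) = 0" using row_zero eq k by force
  ultimately show ?thesis
    using expand[OF A row_zero] expand[OF B] eq[OF k l] by (simp add: cofactor_def)
qed

text \<open>Expanding the determinant along row \<open>k\<close> avoids the modified entry \<open>(l, l)\<close>.\<close>
lemma sym_naive_htpc_add_diag_entry:
  fixes S :: "'a::field mat"
  assumes S: "S \<in> sym_nondeg n" and k: "k < n" and l: "l < n" and kl: "k \<noteq> l"
    and row_zero: "\<And>j. j < n \<Longrightarrow> j \<noteq> l \<Longrightarrow> S $$ (k, j) = 0"
  shows "sym_naive_htpc n S (mat n n (\<lambda>(i, j). S $$ (i, j) + (if i = l \<and> j = l then c else 0)))"
proof -
  note S' = sym_nondegD[OF S]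
  define H where "H = mat n n (\<lambda>(i, j). [:S $$ (i, j):] + (if i = l \<and> j = l then [:0, c:] else 0))"
  have H: "H \<in> carrier_mat n n" by (simp add: H_def)
  have "det H = det (map_mat (\<lambda>x. [:x:]) S)"
    by (rule det_eq_if_row_single_entry[OF H _ k l]) (use S'(1) k l kl row_zero in \<open>auto simp: H_def\<close>)
  then have "det H dvd 1" using S'(2) by (simp only: det_const_poly_mat is_unit_const_poly_iff)
  then have "H \<in> sym_nondeg n" by (intro sym_nondegI[OF H]) (auto simp: H_def S'(3))
  moreover have "eval_mat H 0 = S" "eval_mat H 1 = mat n n (\<lambda>(i, j). S $$ (i, j) + (if i = l \<and> j = l then c else 0))"
    by (rule eq_matI; use S'(1) in \<open>auto simp: H_def\<close>)+
  ultimately show ?thesis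
    by (intro sym_elem_htpy_imp_naive_htpc) (auto simp: sym_elem_htpy_def)
qed

definition diag_snoc :: "'r::zero mat \<Rightarrow> 'r \<Rightarrow> 'r mat" where
  "diag_snoc S u = mat (Suc (dim_row S)) (Suc (dim_row S)) (\<lambda>(i, j).
     if i < dim_row S \<and> j < dim_row S then S $$ (i, j)
     else if i = dim_row S \<and> j = dim_row S then u else 0)"

lemma diag_form_snoc: "diag_form (us @ [u]) = diag_snoc (diag_form us) u"
  by (rule eq_matI) (auto simp: diag_form_def diag_snoc_def nth_append)

lemma det_diag_snoc:
  fixes S :: "'r::idom mat"
  assumes S: "S \<in> carrier_mat m m"
  shows "det (diag_snoc S u) = det S * u"
proof -
  have "diag_snoc S u = four_block_mat S (0\<^sub>m m 1) (0\<^sub>m 1 m) (mat 1 1 (\<lambda>_. u))"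
    by (rule eq_matI) (use S in \<open>auto simp: diag_snoc_def\<close>)
  also have "det \<dots> = det S * det (mat 1 1 (\<lambda>_. u))"
    by (rule det_four_block_mat_lower_left_zero[OF S]) auto
  finally show ?thesis by (simp add: det_single)
qed

lemma sym_elem_htpy_diag_snoc_cong:
  fixes S :: "'a::field mat"
  assumes "sym_elem_htpy m S T" and "u \<noteq> 0"
  shows "sym_elem_htpy (Suc m) (diag_snoc S u) (diag_snoc T u)"
proof -
  from assms(1) obtain H where H: "H \<in> sym_nondeg m" and "eval_mat H 0 = S" "eval_mat H 1 = T"
    unfolding sym_elem_htpy_def by auto
  note H' = sym_nondegD[OF H]
  have Hu: "diag_snoc H [:u:] \<in> carrier_mat (Suc m) (Suc m)" using H'(1) by (simp add: diag_snoc_def)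
  have "det (diag_snoc H [:u:]) = det H * [:u:]" by (rule det_diag_snoc[OF H'(1)])
  then have "det (diag_snoc H [:u:]) dvd 1" using H'(2) \<open>u \<noteq> 0\<close> by (simp add: is_unit_triv)
  then have "diag_snoc H [:u:] \<in> sym_nondeg (Suc m)"
    by (intro sym_nondegI[OF Hu]) (use H'(1) in \<open>auto simp: diag_snoc_def H'(3)\<close>)
  moreover have "eval_mat (diag_snoc H [:u:]) t = diag_snoc (eval_mat H t) u" for t
    by (rule eq_matI) (use H'(1) in \<open>auto simp: diag_snoc_def\<close>)
  ultimately show ?thesis
    unfolding sym_elem_htpy_def using \<open>eval_mat H 0 = S\<close> \<open>eval_mat H 1 = T\<close> by metis
qed

lemma sym_naive_htpc_diag_snoc_cong:
  fixes S :: "'a::field mat"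
  assumes "sym_naive_htpc m S T" and "u \<noteq> 0"
  shows "sym_naive_htpc (Suc m) (diag_snoc S u) (diag_snoc T u)"
  using assms(1) unfolding sym_naive_htpc_def
  by (rule rtranclp_symmetric_map) (rule sym_elem_htpy_diag_snoc_cong[OF _ assms(2)])

lemma sym_naive_htpc_diag_snoc_last:
  fixes S :: "'a::field mat"
  assumes S: "S \<in> sym_nondeg (Suc m)" and u: "S $$ (m, m) \<noteq> 0"
  shows "\<exists>S0 \<in> sym_nondeg m. sym_naive_htpc (Suc m) S (diag_snoc S0 (S $$ (m, m)))"
proof -
  define u where "u = S $$ (m, m)"
  note S' = sym_nondegD[OF S]
  define w where "w j = (if j < m then - S $$ (m, j) / u else 0)" for j
  define E where "E = transvection_mat (Suc m) m w"
  define S1 where "S1 = transpose_mat E * S * E"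
  have htpc: "sym_naive_htpc (Suc m) S S1"
    unfolding S1_def E_def by (rule sym_naive_htpc_transvection[OF S]) (simp_all add: w_def)
  have S1: "S1 \<in> sym_nondeg (Suc m)" by (rule sym_naive_htpc_sym_nondeg[OF htpc S])
  have S1_index: "S1 $$ (i, j) = S $$ (i, j) + w j * S $$ (i, m) + w i * S $$ (m, j) + w i * w j * u"
    if "i < Suc m" "j < Suc m" for i j
    using transvection_congruence_index[OF S'(1) _ that] by (simp add: S1_def E_def u_def)
  have last_col: "S1 $$ (i, m) = 0" if "i < m" for i
    using that u S'(3)[of i m] by (simp add: S1_index w_def u_def)
  have last_row: "S1 $$ (m, j) = 0" if "j < m" for j
    using that last_col sym_nondegD(3)[OF S1, of j m] by simp
  define S0 where "S0 = mat m m (\<lambda>(i, j). S1 $$ (i, j))"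
  have S0: "S0 \<in> carrier_mat m m" by (simp add: S0_def)
  have split: "S1 = diag_snoc S0 u"
  proof (rule eq_matI)
    fix i j assume "i < dim_row (diag_snoc S0 u)" "j < dim_col (diag_snoc S0 u)"
    then have "i < Suc m" "j < Suc m" by (simp_all add: diag_snoc_def S0_def)
    then consider "i < m" "j < m" | "i < m" "j = m" | "i = m" "j < m" | "i = m" "j = m"
      by linarith
    then show "S1 $$ (i, j) = diag_snoc S0 u $$ (i, j)"
    proof cases
      case 4
      then show ?thesis by (simp add: diag_snoc_def S0_def S1_index w_def u_def)
    qed (simp_all add: diag_snoc_def S0_def last_col last_row)
  qed (use sym_nondegD(1)[OF S1] in \<open>simp_all add: diag_snoc_def S0_def\<close>)
  have "det S0 * u dvd 1"
    using sym_nondegD(2)[OF S1] unfolding split det_diag_snoc[OF S0] .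
  then have "det S0 dvd 1" by (rule dvd_mult_left)
  then have "S0 \<in> sym_nondeg m"
    by (rule sym_nondegI[OF S0, rotated]) (simp add: S0_def sym_nondegD(3)[OF S1])
  with htpc split show ?thesis by (auto simp: u_def)
qed

lemma sym_naive_htpc_last_diag_nonzero_anisotropic:
  fixes S :: "'a::field mat"
  assumes S: "S \<in> sym_nondeg (Suc l)" and k: "k < l"
    and "S $$ (l, l) = 0" and "S $$ (k, k) \<noteq> 0"
  shows "\<exists>S'. sym_naive_htpc (Suc l) S S' \<and> S' $$ (l, l) \<noteq> 0"
proof -
  note S' = sym_nondegD[OF S]
  obtain x :: 'a where x: "2 * x * S $$ (k, l) + x * x * S $$ (k, k) \<noteq> 0"
  proof (cases "2 * S $$ (k, l) + S $$ (k, k) = 0")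
    case True
    then have "2 * (-1) * S $$ (k, l) + (-1) * (-1) * S $$ (k, k) = 2 * S $$ (k, k)"
      by (simp add: algebra_simps)
    moreover have "(2::'a) \<noteq> 0" using True \<open>S $$ (k, k) \<noteq> 0\<close> by auto
    ultimately show ?thesis using that[of "-1"] \<open>S $$ (k, k) \<noteq> 0\<close> by auto
  qed (use that[of 1] in simp)
  define w where "w j = (if j = l then x else 0)" for j
  define E where "E = transvection_mat (Suc l) k w"
  have "sym_naive_htpc (Suc l) S (transpose_mat E * S * E)"
    unfolding E_def by (rule sym_naive_htpc_transvection[OF S]) (use k in \<open>simp_all add: w_def\<close>)
  moreover have "(transpose_mat E * S * E) $$ (l, l) = 2 * x * S $$ (k, l) + x * x * S $$ (k, k)"
    using transvection_congruence_index[OF S'(1), of k l l w] k S'(3)[of k l] \<open>S $$ (l, l) = 0\<close>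
    by (simp add: E_def w_def algebra_simps)
  ultimately show ?thesis using x by metis
qed

text \<open>In characteristic 2 the hyperbolic plane is not congruent to a diagonal form, so this case
  needs a homotopy that is not a congruence.\<close>
lemma sym_naive_htpc_last_diag_nonzero_isotropic:
  fixes S :: "'a::field mat"
  assumes S: "S \<in> sym_nondeg (Suc l)" and k: "k < l"
    and "S $$ (l, l) = 0" and "S $$ (k, k) = 0" and a: "S $$ (k, l) \<noteq> 0"
  shows "\<exists>S'. sym_naive_htpc (Suc l) S S' \<and> S' $$ (l, l) \<noteq> 0"
proof -
  note S' = sym_nondegD[OF S]
  define w where "w j = (if j < l \<and> j \<noteq> k then - S $$ (k, j) / S $$ (k, l) else 0)" for j
  define E where "E = transvection_mat (Suc l) l w"
  define S1 where "S1 = transpose_mat E * S * E"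
  have htpc: "sym_naive_htpc (Suc l) S S1"
    unfolding S1_def E_def by (rule sym_naive_htpc_transvection[OF S]) (simp_all add: w_def)
  have S1: "S1 \<in> sym_nondeg (Suc l)" by (rule sym_naive_htpc_sym_nondeg[OF htpc S])
  have S1_index: "S1 $$ (i, j) = S $$ (i, j) + w j * S $$ (i, l) + w i * S $$ (l, j) + w i * w j * S $$ (l, l)"
    if "i < Suc l" "j < Suc l" for i j
    using transvection_congruence_index[OF S'(1) _ that] by (simp add: S1_def E_def)
  have row_zero: "S1 $$ (k, j) = 0" if "j < Suc l" "j \<noteq> l" for j
    using that k a \<open>S $$ (k, k) = 0\<close> by (auto simp: S1_index w_def)
  have "S1 $$ (l, l) = 0" using \<open>S $$ (l, l) = 0\<close> by (simp add: S1_index w_def)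
  define S2 where "S2 = mat (Suc l) (Suc l) (\<lambda>(i, j). S1 $$ (i, j) + (if i = l \<and> j = l then 1 else 0))"
  have "sym_naive_htpc (Suc l) S1 S2"
    unfolding S2_def by (rule sym_naive_htpc_add_diag_entry[OF S1 _ _ _ row_zero]) (use k in auto)
  moreover have "S2 $$ (l, l) = 1" using \<open>S1 $$ (l, l) = 0\<close> by (simp add: S2_def)
  ultimately show ?thesis using htpc sym_naive_htpc_trans by (metis one_neq_zero)
qed

lemma sym_naive_htpc_last_diag_nonzero:
  fixes S :: "'a::field mat"
  assumes S: "S \<in> sym_nondeg (Suc l)"
  shows "\<exists>S'. sym_naive_htpc (Suc l) S S' \<and> S' $$ (l, l) \<noteq> 0"
proof (cases "S $$ (l, l) = 0")
  case True
  note S' = sym_nondegD[OF S]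
  have "\<exists>k < l. S $$ (k, l) \<noteq> 0"
  proof (rule ccontr)
    assume "\<not> (\<exists>k < l. S $$ (k, l) \<noteq> 0)"
    then have "S $$ (l, j) = 0" if "j < Suc l" for j
      using that True S'(3)[of j l] by (auto simp: less_Suc_eq)
    then have "det S = 0"
      by (subst laplace_expansion_row[OF S'(1), of l]) auto
    then show False using S'(2) by simp
  qed
  then obtain k where "k < l" "S $$ (k, l) \<noteq> 0" by blast
  then show ?thesis
    using sym_naive_htpc_last_diag_nonzero_anisotropic[OF S \<open>k < l\<close> True]
      sym_naive_htpc_last_diag_nonzero_isotropic[OF S \<open>k < l\<close> True] by blast
next
  case False
  then show ?thesis using sym_naive_htpc_refl by blast
qed

lemma sym_naive_htpc_ex_diag_snoc:
  fixes S :: "'a::field mat"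
  assumes S: "S \<in> sym_nondeg (Suc m)"
  shows "\<exists>S0 u. S0 \<in> sym_nondeg m \<and> u \<noteq> 0 \<and> sym_naive_htpc (Suc m) S (diag_snoc S0 u)"
proof -
  obtain S' where htpc: "sym_naive_htpc (Suc m) S S'" and u: "S' $$ (m, m) \<noteq> 0"
    using sym_naive_htpc_last_diag_nonzero[OF S] by blast
  obtain S0 where "S0 \<in> sym_nondeg m" "sym_naive_htpc (Suc m) S' (diag_snoc S0 (S' $$ (m, m)))"
    using sym_naive_htpc_diag_snoc_last[OF sym_naive_htpc_sym_nondeg[OF htpc S] u] by blast
  with htpc u show ?thesis by (blast intro: sym_naive_htpc_trans)
qed

lemma sym_naive_htpc_diag_form:
  fixes S :: "'a::field mat"
  assumes "S \<in> sym_nondeg n"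
  shows "\<exists>us. length us = n \<and> (\<forall>u \<in> set us. u \<noteq> 0) \<and> sym_naive_htpc n S (diag_form us)"
  using assms
proof (induction n arbitrary: S)
  case 0
  then have "S = diag_form []" by (intro eq_matI) (auto simp: sym_nondeg_def diag_form_def)
  then show ?case by simp
next
  case (Suc m)
  obtain S0 u where "S0 \<in> sym_nondeg m" "u \<noteq> 0" and htpc: "sym_naive_htpc (Suc m) S (diag_snoc S0 u)"
    using sym_naive_htpc_ex_diag_snoc[OF Suc.prems] by blast
  moreover obtain us where "length us = m" "\<forall>u \<in> set us. u \<noteq> 0" "sym_naive_htpc m S0 (diag_form us)"
    using Suc.IH[OF \<open>S0 \<in> sym_nondeg m\<close>] by blast
  ultimately show ?case
    by (intro exI[of _ "us @ [u]"]) (auto simp: diag_form_snoc intro: sym_naive_htpc_trans sym_naive_htpc_diag_snoc_cong)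
qed

section \<open>Resultants and B\'ezout relations\<close>

lemma sum_lessThan_add_split:
  "(\<Sum>i<m + n. f i) = (\<Sum>i<m. f i) + (\<Sum>i<n. f (m + i :: nat))"
proof -
  have "(\<Sum>i<m + n. f i) = (\<Sum>i<m. f i) + (\<Sum>i\<in>{m..<m + n}. f i)"
    by (simp flip: atLeast0LessThan add: sum.atLeastLessThan_concat)
  also have "(\<Sum>i\<in>{m..<m + n}. f i) = (\<Sum>i<n. f (m + i))"
    using sum.shift_bounds_nat_ivl[of f 0 m n] by (simp add: atLeast0LessThan add.commute)
  finally show ?thesis .
qed

text \<open>The polynomial with coefficient vector \<open>c 0, \<dots>, c (n - 1)\<close>, read from \<open>X\<^sup>n\<^sup>-\<^sup>1\<close> down to
  \<open>X\<^sup>0\<close>; this is how the rows of a Sylvester matrix are indexed.\<close>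
definition rev_coeffs_poly :: "nat \<Rightarrow> (nat \<Rightarrow> 'a::comm_ring_1) \<Rightarrow> 'a poly" where
  "rev_coeffs_poly n c = (\<Sum>i<n. monom (c i) (n - Suc i))"

lemma coeff_rev_coeffs_poly_mult:
  "coeff (rev_coeffs_poly n c * A) k = (\<Sum>i<n. if n - Suc i \<le> k then c i * coeff A (k - (n - Suc i)) else 0)"
  unfolding rev_coeffs_poly_def sum_distrib_right coeff_sum by (simp add: coeff_monom_mult)

lemma degree_rev_coeffs_poly: "0 < n \<Longrightarrow> degree (rev_coeffs_poly n c) < n"
  unfolding rev_coeffs_poly_def
  by (rule le_less_trans[OF degree_sum_le[of _ _ "n - 1"]]) (auto intro: order.trans[OF degree_monom_le])

lemma rev_coeffs_poly_coeff:
  assumes "degree P < n"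
  shows "rev_coeffs_poly n (\<lambda>i. coeff P (n - Suc i)) = P"
proof -
  have "rev_coeffs_poly n (\<lambda>i. coeff P (n - Suc i)) = (\<Sum>i<n. monom (coeff P i) i)"
    unfolding rev_coeffs_poly_def by (rule sum.nat_diff_reindex)
  also have "\<dots> = P"
    using poly_as_sum_of_monoms'[of P "n - 1"] assms by (simp add: lessThan_Suc_atMost[symmetric])
  finally show ?thesis .
qed

lemma sylvester_mat_sub_vec_mult:
  fixes A B :: "'a::comm_ring_1 poly"
  assumes A: "degree A \<le> n" and B: "degree B \<le> n" and j: "j < n + n"
  shows "(\<Sum>i<n + n. c i * sylvester_mat_sub n n A B $$ (i, j))
       = coeff (rev_coeffs_poly n c * A + rev_coeffs_poly n (\<lambda>i. c (n + i)) * B) (n + n - 1 - j)"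
proof -
  have shifted_row: "(if i \<le> j \<and> j \<le> n + i then coeff P (n + i - j) else 0)
      = (if n - Suc i \<le> n + n - 1 - j then coeff P (n + n - 1 - j - (n - Suc i)) else 0)"
    if "degree P \<le> n" "i < n" for P :: "'a poly" and i
  proof (cases "j < i")
    case True
    then have "coeff P (n + n - 1 - j - (n - Suc i)) = 0" using that j by (intro coeff_eq_0) auto
    then show ?thesis using True by auto
  next
    case False
    then show ?thesis using that j by (auto intro!: arg_cong[of _ _ "coeff P"])
  qed
  let ?S = "sylvester_mat_sub n n A B"
  have row_A: "c i * ?S $$ (i, j)
      = (if n - Suc i \<le> n + n - 1 - j then c i * coeff A (n + n - 1 - j - (n - Suc i)) else 0)"
    if "i < n" for i
  proof -
    have "?S $$ (i, j) = (if i \<le> j \<and> j \<le> n + i then coeff A (n + i - j) else 0)"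
      using that j by (auto simp: sylvester_mat_sub_index)
    then show ?thesis unfolding shifted_row[OF A that] by simp
  qed
  have row_B: "c (n + i) * ?S $$ (n + i, j)
      = (if n - Suc i \<le> n + n - 1 - j then c (n + i) * coeff B (n + n - 1 - j - (n - Suc i)) else 0)"
    if "i < n" for i
  proof -
    have "?S $$ (n + i, j) = (if i \<le> j \<and> j \<le> n + i then coeff B (n + i - j) else 0)"
      using that j by (auto simp: sylvester_mat_sub_index)
    then show ?thesis unfolding shifted_row[OF B that] by simp
  qed
  show ?thesis
    unfolding sum_lessThan_add_split coeff_add coeff_rev_coeffs_poly_mult
    by (intro arg_cong2[of _ _ _ _ "(+)"] sum.cong) (simp_all add: row_A row_B)
qed

text \<open>The last row of the adjugate of the Sylvester matrix, divided by the resultant, is the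
  coefficient vector of a B\'ezout relation.\<close>
lemma bezout_if_resultant_sub_unit:
  fixes A B :: "'a::comm_ring_1 poly"
  assumes A: "degree A \<le> n" and B: "degree B \<le> n" and n: "0 < n"
    and res: "resultant_sub n n A B dvd 1"
  shows "\<exists>U V. A * U + B * V = 1"
proof -
  define M where "M = sylvester_mat_sub n n A B"
  have M: "M \<in> carrier_mat (n + n) (n + n)" unfolding M_def by (rule sylvester_mat_sub_carrier)
  from res obtain e where e: "1 = det M * e" unfolding resultant_sub_def M_def by (auto elim: dvdE)
  have adj: "adj_mat M * M = det M \<cdot>\<^sub>m 1\<^sub>m (n + n)" "adj_mat M \<in> carrier_mat (n + n) (n + n)"
    using adj_mat[OF M] by auto
  define c where "c i = e * adj_mat M $$ (n + n - 1, i)" for i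
  define P where "P = rev_coeffs_poly n c * A + rev_coeffs_poly n (\<lambda>i. c (n + i)) * B"
  have low: "coeff P (n + n - 1 - j) = (if j = n + n - 1 then 1 else 0)" if j: "j < n + n" for j
  proof -
    have "coeff P (n + n - 1 - j) = (\<Sum>i<n + n. c i * M $$ (i, j))"
      unfolding P_def M_def by (rule sylvester_mat_sub_vec_mult[OF A B j, symmetric])
    also have "\<dots> = e * (adj_mat M * M) $$ (n + n - 1, j)"
      using M adj(2) j n by (simp add: c_def scalar_prod_def sum_distrib_left mult.assoc atLeast0LessThan)
    also have "\<dots> = (if j = n + n - 1 then 1 else 0)"
      unfolding adj using j n e by (auto simp: mult.commute)
    finally show ?thesis .
  qed
  have "degree (rev_coeffs_poly n c' * C) < n + n" if "degree C \<le> n" for c' and C :: "'a poly"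
    using degree_mult_le[of "rev_coeffs_poly n c'" C] degree_rev_coeffs_poly[OF n, of c'] that by linarith
  then have "degree P < n + n"
    using A B unfolding P_def by (intro degree_add_less) auto
  have "P = 1"
  proof (rule poly_eqI)
    fix k
    show "coeff P k = coeff 1 k"
    proof (cases "k < n + n")
      case True
      then show ?thesis using low[of "n + n - 1 - k"] by (auto simp: coeff_1)
    next
      case False
      then show ?thesis using \<open>degree P < n + n\<close> n by (auto simp: coeff_1 coeff_eq_0)
    qed
  qed
  then show ?thesis unfolding P_def by (metis mult.commute)
qed

lemma bezout_degree_bounded:
  fixes A B :: "'a::idom poly"
  assumes monic: "lead_coeff A = 1" and A: "degree A = n" and B: "degree B < n"
    and bezout: "A * U + B * V = 1" and W: "degree W < n + n"
  shows "\<exists>P Q. degree P < n \<and> degree Q < n \<and> P * A + Q * B = W"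
proof -
  have "A \<noteq> 0" using monic by auto
  obtain q s where "pseudo_divmod (W * V) A = (q, s)" by (cases "pseudo_divmod (W * V) A")
  from pseudo_divmod[OF \<open>A \<noteq> 0\<close> this] monic A
  have WV: "W * V = A * q + s" and s: "s = 0 \<or> degree s < n" by auto
  define P where "P = W * U + B * q"
  have "W = W * (A * U + B * V)" using bezout by simp
  also have "\<dots> = A * (W * U) + B * (W * V)" by (simp add: algebra_simps)
  also have "\<dots> = P * A + s * B" unfolding WV P_def by (simp add: algebra_simps)
  finally have PsW: "P * A + s * B = W" by simp
  have "degree s < n" using s B by auto
  then have "degree (s * B) < n + n" using B degree_mult_le[of s B] by linarith
  have "degree P < n"
  proof (cases "P = 0")
    case False
    have "degree (A * P) = n + degree P" using degree_monic_mult[of A P] monic False A by simp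
    moreover have "A * P = W - s * B" using PsW by (simp add: algebra_simps)
    moreover have "degree (W - s * B) < n + n"
      using degree_diff_le_max[of W "s * B"] W \<open>degree (s * B) < n + n\<close> by auto
    ultimately show ?thesis by auto
  qed (use B in simp)
  with \<open>degree s < n\<close> PsW show ?thesis by blast
qed

text \<open>Conversely, solving \<open>P A + Q B = X\<^sup>k\<close> for all \<open>k < 2n\<close> with \<open>deg P, deg Q < n\<close> yields a left
  inverse of the Sylvester matrix.\<close>
lemma resultant_sub_unit_if_bezout:
  fixes A B :: "'a::idom poly"
  assumes monic: "lead_coeff A = 1" and A: "degree A = n" and B: "degree B < n"
    and bezout: "A * U + B * V = 1"
  shows "resultant_sub n n A B dvd 1"
proof -
  define M where "M = sylvester_mat_sub n n A B"
  have M: "M \<in> carrier_mat (n + n) (n + n)" unfolding M_def by (rule sylvester_mat_sub_carrier)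
  have "\<forall>r < n + n. \<exists>P Q. degree P < n \<and> degree Q < n \<and> P * A + Q * B = monom 1 (n + n - 1 - r)"
    using bezout_degree_bounded[OF monic A B bezout] by (auto simp: degree_monom_eq)
  then obtain P Q where PQ: "\<And>r. r < n + n \<Longrightarrow>
      degree (P r) < n \<and> degree (Q r) < n \<and> P r * A + Q r * B = monom 1 (n + n - 1 - r)"
    by metis
  define c where "c r i = (if i < n then coeff (P r) (n - Suc i) else coeff (Q r) (n - Suc (i - n)))" for r i
  have c: "rev_coeffs_poly n (c r) * A + rev_coeffs_poly n (\<lambda>i. c r (n + i)) * B = monom 1 (n + n - 1 - r)"
    if "r < n + n" for r
  proof -
    have "rev_coeffs_poly n (c r) = rev_coeffs_poly n (\<lambda>i. coeff (P r) (n - Suc i))"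
      "rev_coeffs_poly n (\<lambda>i. c r (n + i)) = rev_coeffs_poly n (\<lambda>i. coeff (Q r) (n - Suc i))"
      by (simp_all add: rev_coeffs_poly_def c_def)
    then show ?thesis using PQ[OF that] by (simp add: rev_coeffs_poly_coeff)
  qed
  define N where "N = mat (n + n) (n + n) (\<lambda>(r, i). c r i)"
  have N: "N \<in> carrier_mat (n + n) (n + n)" by (simp add: N_def)
  have A_le: "degree A \<le> n" and B_le: "degree B \<le> n" using A B by simp_all
  have "N * M = 1\<^sub>m (n + n)"
  proof (rule eq_matI)
    fix r j assume "r < dim_row (1\<^sub>m (n + n))" "j < dim_col (1\<^sub>m (n + n))"
    then have r: "r < n + n" and j: "j < n + n" by auto
    have "(N * M) $$ (r, j) = (\<Sum>i<n + n. c r i * M $$ (i, j))"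
      using M N r j by (simp add: N_def scalar_prod_def atLeast0LessThan)
    also have "\<dots> = coeff (monom 1 (n + n - 1 - r)) (n + n - 1 - j)"
      unfolding M_def sylvester_mat_sub_vec_mult[OF A_le B_le j] c[OF r] ..
    also have "\<dots> = 1\<^sub>m (n + n) $$ (r, j)" using r j by (auto simp: coeff_monom)
    finally show "(N * M) $$ (r, j) = 1\<^sub>m (n + n) $$ (r, j)" .
  qed (use M N in auto)
  then have "det N * det M = 1" using det_mult[OF N M] by simp
  then show ?thesis unfolding resultant_sub_def M_def[symmetric] by (metis dvdI mult.commute)
qed

lemma ratfun_iff_bezout:
  fixes A B :: "'a::idom poly"
  shows "(A, B) \<in> ratfun n \<longleftrightarrow>
    lead_coeff A = 1 \<and> degree A = n \<and> degree B < n \<and> (\<exists>U V. A * U + B * V = 1)"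
  using bezout_if_resultant_sub_unit[of A n B] resultant_sub_unit_if_bezout[of A n B]
  by (auto simp: ratfun_def)

section \<open>Pointed rational functions\<close>

text \<open>Elements of \<open>k[T][X]\<close> have type \<open>'a poly poly\<close>: \<open>eval_T t\<close> substitutes \<open>T = t\<close>, and
  \<open>const_T\<close> regards a polynomial over \<open>k\<close> as constant in \<open>T\<close>.\<close>
abbreviation eval_T :: "'a::comm_ring_1 \<Rightarrow> 'a poly poly \<Rightarrow> 'a poly" where
  "eval_T t p \<equiv> map_poly (\<lambda>c. poly c t) p"

abbreviation const_T :: "'a::comm_ring_1 poly \<Rightarrow> 'a poly poly" where
  "const_T p \<equiv> map_poly (\<lambda>x. [:x:]) p"

lemma const_T_add [simp]: "const_T (p + q) = const_T p + const_T q"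
  by (rule map_poly_add) simp_all

lemma const_T_mult [simp]: "const_T (p * q) = const_T p * const_T q"
  and const_T_diff [simp]: "const_T (p - q) = const_T p - const_T q"
proof -
  interpret map_poly_comm_ring_hom "\<lambda>x::'a::comm_ring_1. [:x:]"
    by (rule map_poly_comm_ring_hom.intro, rule comm_ring_hom_const_poly)
  show "const_T (p * q) = const_T p * const_T q" by (rule hom_mult)
  show "const_T (p - q) = const_T p - const_T q" by (rule hom_minus)
qed

lemma coeff_const_T [simp]: "coeff (const_T p) i = [:coeff p i:]"
  by (simp add: coeff_map_poly)

lemma degree_const_T [simp]: "degree (const_T p) = degree p"
  by (rule degree_map_poly) simp

interpretation eval_T_hom: map_poly_comm_ring_hom "\<lambda>c::'a::comm_ring_1 poly. poly c t" for t ..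

lemma eval_T_const_T [simp]: "eval_T t (const_T p) = p"
  by (simp add: map_poly_map_poly o_def)

lemma ratfun_naive_htpc_refl [simp]: "ratfun_naive_htpc n f f"
  by (simp add: ratfun_naive_htpc_def)

lemma ratfun_naive_htpc_trans [trans]:
  "ratfun_naive_htpc n f g \<Longrightarrow> ratfun_naive_htpc n g h \<Longrightarrow> ratfun_naive_htpc n f h"
  unfolding ratfun_naive_htpc_def by (rule rtranclp_trans)

lemma ratfun_elem_htpy_imp_naive_htpc:
  "ratfun_elem_htpy n f g \<Longrightarrow> ratfun_naive_htpc n f g"
  "ratfun_elem_htpy n g f \<Longrightarrow> ratfun_naive_htpc n f g"
  unfolding ratfun_naive_htpc_def by (simp_all add: r_into_rtranclp)

lemma ratfun_elem_htpyI: "H \<in> ratfun n \<Longrightarrow> ratfun_elem_htpy n (eval_ratfun H 0) (eval_ratfun H 1)"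
  unfolding ratfun_elem_htpy_def by blast

lemma ratfun_eval_ratfun:
  fixes H :: "'a::idom poly poly \<times> 'a poly poly"
  assumes "H \<in> ratfun n"
  shows "eval_ratfun H t \<in> ratfun n"
proof -
  obtain A B where H: "H = (A, B)" by (cases H)
  obtain U V where monic: "lead_coeff A = 1" and A: "degree A = n" and B: "degree B < n"
    and bezout: "A * U + B * V = 1"
    using assms unfolding H ratfun_iff_bezout by blast
  have "coeff (eval_T t A) n = 1" using monic A by (simp add: coeff_map_poly)
  moreover have "degree (eval_T t A) \<le> n" using A degree_map_poly_le[of _ A] by metis
  ultimately have "lead_coeff (eval_T t A) = 1 \<and> degree (eval_T t A) = n"
    by (metis le_antisym le_degree one_neq_zero)
  moreover have "degree (eval_T t B) < n" using B degree_map_poly_le[of _ B] by (metis le_less_trans)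
  moreover have "eval_T t A * eval_T t U + eval_T t B * eval_T t V = 1"
    using arg_cong[OF bezout, of "eval_T t"] by (simp add: hom_distribs)
  ultimately show ?thesis unfolding H eval_ratfun_def ratfun_iff_bezout by auto
qed

lemma ratfun_naive_htpc_ratfun:
  fixes f :: "'a::field poly \<times> 'a poly"
  assumes "ratfun_naive_htpc n f g" and "f \<in> ratfun n"
  shows "g \<in> ratfun n"
  using assms unfolding ratfun_naive_htpc_def
  by (rule rtranclp_symmetric_invariant) (unfold ratfun_elem_htpy_def, metis ratfun_eval_ratfun)

lemma ratfun_snd_nonzero:
  fixes A B :: "'a::field poly"
  assumes "(A, B) \<in> ratfun n"
  shows "B \<noteq> 0"
proof
  assume "B = 0"
  obtain U V where "degree A = n" "degree B < n" and bezout: "A * U + B * V = 1"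
    using assms unfolding ratfun_iff_bezout by blast
  from bezout \<open>B = 0\<close> have "1 = A * U" by simp
  then have "A dvd 1" by (rule dvdI)
  with \<open>degree A = n\<close> \<open>degree B < n\<close> show False by (simp add: is_unit_iff_degree)
qed

text \<open>Unlike \<open>ratfun m\<close>, this admits \<open>m = 0\<close>, i.e.\ the pair \<open>(1, 0)\<close>.\<close>
definition coprime_pairs :: "nat \<Rightarrow> ('a::comm_ring_1 poly \<times> 'a poly) set" where
  "coprime_pairs m = {(A, B). lead_coeff A = 1 \<and> degree A = m \<and> (B = 0 \<or> degree B < m)
                              \<and> (\<exists>U V. A * U + B * V = 1)}"

lemma ratfun_imp_coprime_pairs: "(f :: 'a::idom poly \<times> 'a poly) \<in> ratfun m \<Longrightarrow> f \<in> coprime_pairs m"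
  by (cases f) (auto simp: ratfun_iff_bezout coprime_pairs_def)

lemma const_T_coprime_pairs:
  assumes "(A, B) \<in> coprime_pairs m"
  shows "(const_T A, const_T B) \<in> coprime_pairs m"
proof -
  from assms obtain U V where "A * U + B * V = 1" by (auto simp: coprime_pairs_def)
  from arg_cong[OF this, of const_T]
  have "const_T A * const_T U + const_T B * const_T V = 1" by simp
  with assms show ?thesis by (auto simp: coprime_pairs_def)
qed

definition bezout_mat :: "nat \<Rightarrow> 'a::comm_ring_1 poly \<Rightarrow> 'a poly \<Rightarrow> 'a poly \<Rightarrow> 'a poly \<Rightarrow> bool" where
  "bezout_mat d A B U V \<longleftrightarrow> 0 < d \<and> lead_coeff A = 1 \<and> degree A = d \<and> degree B < d
                           \<and> degree U < d \<and> degree V < d \<and> A * U + B * V = 1"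

text \<open>Multiplication by the matrix \<open>[[A, -V], [B, U]]\<close>, as in the definition of \<open>\<oplus>\<^sup>N\<close>.\<close>
definition bezout_act :: "'a::comm_ring_1 poly \<Rightarrow> 'a poly \<Rightarrow> 'a poly \<Rightarrow> 'a poly \<Rightarrow>
    'a poly \<times> 'a poly \<Rightarrow> 'a poly \<times> 'a poly" where
  "bezout_act A B U V f = (A * fst f - V * snd f, B * fst f + U * snd f)"

lemma bezout_mat_const_T:
  assumes "bezout_mat d A B U V"
  shows "bezout_mat d (const_T A) (const_T B) (const_T U) (const_T V)"
proof -
  from assms have "A * U + B * V = 1" by (simp add: bezout_mat_def)
  from arg_cong[OF this, of const_T]
  have "const_T A * const_T U + const_T B * const_T V = 1" by simp
  with assms show ?thesis by (auto simp: bezout_mat_def)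
qed

lemma eval_ratfun_bezout_act:
  "eval_ratfun (bezout_act A B U V f) t
     = bezout_act (eval_T t A) (eval_T t B) (eval_T t U) (eval_T t V) (eval_ratfun f t)"
  by (simp add: bezout_act_def eval_ratfun_def hom_distribs)

lemma bezout_act_ratfun:
  fixes A B U V :: "'a::idom poly"
  assumes mat: "bezout_mat d A B U V" and f: "f \<in> coprime_pairs m"
  shows "bezout_act A B U V f \<in> ratfun (d + m)"
proof -
  obtain A2 B2 U2 V2 where f_eq: "f = (A2, B2)" and monic2: "lead_coeff A2 = 1" and A2: "degree A2 = m"
    and B2: "B2 = 0 \<or> degree B2 < m" and bezout2: "A2 * U2 + B2 * V2 = 1"
    using f by (cases f) (auto simp: coprime_pairs_def)
  have d: "0 < d" and monic: "lead_coeff A = 1" and A: "degree A = d" and B: "degree B < d"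
    and U: "degree U < d" and V: "degree V < d" and bezout: "A * U + B * V = 1"
    using mat by (auto simp: bezout_mat_def)
  have "A \<noteq> 0" "A2 \<noteq> 0" using monic monic2 by auto
  then have AA2: "degree (A * A2) = d + m" using A A2 by (simp add: degree_mult_eq)
  have "lead_coeff (A * A2) = 1" by (simp only: lead_coeff_mult monic monic2 mult_1)
  have small: "degree (C * B2) < d + m" if "degree C < d" for C
    using B2 degree_mult_le[of C B2] that d by auto
  have "degree (V * B2) < degree (A * A2)" using small[OF V] AA2 by simp
  then have "degree (A * A2 - V * B2) = d + m \<and> lead_coeff (A * A2 - V * B2) = 1"
    using AA2 \<open>lead_coeff (A * A2) = 1\<close> degree_add_eq_right[of "- (V * B2)" "A * A2"]
      lead_coeff_add_le[of "- (V * B2)" "A * A2"] by simp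
  moreover have "degree (B * A2 + U * B2) < d + m"
    using degree_mult_le[of B A2] B A2 small[OF U] by (intro degree_add_less) auto
  moreover have "(A * A2 - V * B2) * (U * U2 - B * V2) + (B * A2 + U * B2) * (A * V2 + V * U2)
      = (A * U + B * V) * (A2 * U2 + B2 * V2)"
    by (simp add: algebra_simps)
  ultimately show ?thesis
    unfolding f_eq bezout_act_def ratfun_iff_bezout using bezout bezout2 by auto
qed

lemma ratfun_elem_htpy_bezout_act_left:
  fixes A B U V :: "'a::field poly poly"
  assumes mat: "bezout_mat d A B U V" and f: "f \<in> coprime_pairs m"
  shows "ratfun_elem_htpy (d + m)
    (bezout_act (eval_T 0 A) (eval_T 0 B) (eval_T 0 U) (eval_T 0 V) f)
    (bezout_act (eval_T 1 A) (eval_T 1 B) (eval_T 1 U) (eval_T 1 V) f)"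
proof -
  obtain A2 B2 where f_eq: "f = (A2, B2)" by (cases f)
  have "bezout_act A B U V (const_T A2, const_T B2) \<in> ratfun (d + m)"
    using bezout_act_ratfun[OF mat const_T_coprime_pairs] f by (simp add: f_eq)
  from ratfun_elem_htpyI[OF this] show ?thesis
    unfolding eval_ratfun_bezout_act by (simp add: eval_ratfun_def f_eq)
qed

lemma ratfun_elem_htpy_bezout_act_right:
  fixes A B U V :: "'a::field poly"
  assumes mat: "bezout_mat d A B U V" and "ratfun_elem_htpy m f g"
  shows "ratfun_elem_htpy (d + m) (bezout_act A B U V f) (bezout_act A B U V g)"
proof -
  from assms(2) obtain H where H: "H \<in> ratfun m" and "eval_ratfun H 0 = f" "eval_ratfun H 1 = g"
    unfolding ratfun_elem_htpy_def by blast
  have "bezout_act (const_T A) (const_T B) (const_T U) (const_T V) H \<in> ratfun (d + m)"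
    by (rule bezout_act_ratfun[OF bezout_mat_const_T[OF mat] ratfun_imp_coprime_pairs[OF H]])
  from ratfun_elem_htpyI[OF this] show ?thesis
    unfolding eval_ratfun_bezout_act by (simp add: \<open>eval_ratfun H 0 = f\<close> \<open>eval_ratfun H 1 = g\<close>)
qed

lemma ratfun_naive_htpc_bezout_act_right:
  fixes A B U V :: "'a::field poly"
  assumes "bezout_mat d A B U V" and "ratfun_naive_htpc m f g"
  shows "ratfun_naive_htpc (d + m) (bezout_act A B U V f) (bezout_act A B U V g)"
  using assms(2) unfolding ratfun_naive_htpc_def
  by (rule rtranclp_symmetric_map) (rule ratfun_elem_htpy_bezout_act_right[OF assms(1)])

lemma ratfun_naive_htpc_add_smult:
  fixes A B :: "'a::field poly"
  assumes "(A, B) \<in> ratfun n"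
  shows "ratfun_naive_htpc n (A, B) (A + smult c B, B)"
proof -
  obtain U V where monic: "lead_coeff A = 1" and A: "degree A = n" and B: "degree B < n"
    and bezout: "A * U + B * V = 1"
    using assms unfolding ratfun_iff_bezout by blast
  define H where "H = (const_T A + smult [:0, c:] (const_T B), const_T B)"
  have small: "degree (smult [:0, c:] (const_T B)) < n"
    using B degree_smult_le[of "[:0, c:]" "const_T B"] by simp
  then have "degree (fst H) = n" using A by (simp add: H_def degree_add_eq_left)
  moreover have "lead_coeff (fst H) = 1"
    using \<open>degree (fst H) = n\<close> coeff_eq_0[OF small] monic A by (auto simp: H_def one_pCons)
  moreover have "fst H * const_T U + snd H * (const_T V - smult [:0, c:] (const_T U)) = const_T (A * U + B * V)"
    by (simp add: H_def algebra_simps)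
  ultimately have "H \<in> ratfun n" using B bezout by (auto simp: H_def ratfun_iff_bezout)
  from ratfun_elem_htpyI[OF this] show ?thesis
    by (intro ratfun_elem_htpy_imp_naive_htpc) (simp add: H_def eval_ratfun_def hom_distribs)
qed

lemma bezout_UV_X:
  assumes "(u::'a::field) \<noteq> 0"
  shows "bezout_UV [:0, 1:] [:u:] = (0, [:1 / u:])"
  unfolding bezout_UV_def
proof (rule the_equality)
  fix x :: "'a poly \<times> 'a poly"
  assume x: "case x of (U, V) \<Rightarrow> [:0, 1:] * U + [:u:] * V = 1 \<and>
    (U = 0 \<or> degree U + 2 \<le> degree [:0, 1::'a:]) \<and> (V = 0 \<or> degree V + 1 \<le> degree [:0, 1::'a:])"
  obtain U V where x_eq: "x = (U, V)" by (cases x)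
  from x x_eq have "U = 0" and uV: "[:u:] * V = 1" by auto
  have "V = smult (1 / u) ([:u:] * V)" using assms by simp
  also have "\<dots> = [:1 / u:]" unfolding uV by (simp add: one_pCons)
  finally show "x = (0, [:1 / u:])" using \<open>U = 0\<close> by (simp add: x_eq)
qed (use assms in \<open>simp add: one_pCons\<close>)

lemma oplusN_X: "u \<noteq> 0 \<Longrightarrow> oplusN ([:0, 1:], [:u:]) f = bezout_act [:0, 1:] [:u:] 0 [:1 / u:] f"
  by (cases f) (simp add: oplusN_def bezout_act_def bezout_UV_X)

lemma bezout_mat_X: "(u::'a::field) \<noteq> 0 \<Longrightarrow> bezout_mat 1 [:0, 1:] [:u:] 0 [:1 / u:]"
  by (simp add: bezout_mat_def one_pCons)

lemma ratfun_eq_oplusN_X: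
  fixes A B :: "'a::field poly"
  assumes f: "(A, B) \<in> ratfun n" and n: "2 \<le> n" and B: "degree B = n - 1"
    and coeff: "lead_coeff B * coeff A (n - 1) = coeff B (n - 2)"
  shows "\<exists>g. g \<in> ratfun (n - 1) \<and> (A, B) = oplusN ([:0, 1:], [:lead_coeff B:]) g"
proof -
  obtain U V where monic: "lead_coeff A = 1" and A: "degree A = n" and bezout: "A * U + B * V = 1"
    using f unfolding ratfun_iff_bezout by blast
  define u where "u = lead_coeff B"
  have "B \<noteq> 0" using B n by auto
  then have "u \<noteq> 0" by (simp add: u_def)
  define A' where "A' = smult (1 / u) B"
  define B' where "B' = [:0, 1:] * B - smult u A"
  have "coeff B' i = 0" if i: "n - 2 < i" for i
  proof -
    have "coeff B' i = (if i = 0 then 0 else coeff B (i - 1)) - u * coeff A i"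
      by (simp add: B'_def coeff_pCons split: nat.split)
    moreover consider "i = n - 1" | "i = n" | "n < i" using i n by linarith
    then have "(if i = 0 then 0 else coeff B (i - 1)) = u * coeff A i"
    proof cases
      case 1
      then show ?thesis using n coeff by (simp add: u_def numeral_2_eq_2 Suc_diff_Suc)
    next
      case 2
      then show ?thesis using n B monic A by (simp add: u_def)
    next
      case 3
      then show ?thesis using n A B by (simp add: coeff_eq_0)
    qed
    ultimately show ?thesis by simp
  qed
  then have "degree B' \<le> n - 2" by (simp add: degree_le)
  then have "degree B' < n - 1" using n by linarith
  moreover have "A' * (smult u V + [:0, 1:] * U) + B' * (- smult (1 / u) U) = 1"
  proof -
    have "A' * (smult u V + [:0, 1:] * U) + B' * (- smult (1 / u) U) = smult (u * (1 / u)) (A * U + B * V)"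
      by (simp add: A'_def B'_def algebra_simps)
    then show ?thesis using \<open>u \<noteq> 0\<close> bezout by simp
  qed
  moreover have "lead_coeff A' = 1" "degree A' = n - 1"
    using \<open>u \<noteq> 0\<close> B by (simp_all add: A'_def u_def)
  ultimately have "(A', B') \<in> ratfun (n - 1)" unfolding ratfun_iff_bezout by blast
  moreover have "oplusN ([:0, 1:], [:u:]) (A', B') = (A, B)"
    using \<open>u \<noteq> 0\<close> by (simp add: oplusN_X bezout_act_def A'_def B'_def algebra_simps)
  ultimately show ?thesis unfolding u_def by metis
qed

lemma ratfun_naive_htpc_oplusN_X:
  fixes A B :: "'a::field poly"
  assumes f: "(A, B) \<in> ratfun n" and n: "2 \<le> n" and B: "degree B = n - 1"
  shows "\<exists>u g. u \<noteq> 0 \<and> g \<in> ratfun (n - 1) \<and> ratfun_naive_htpc n (A, B) (oplusN ([:0, 1:], [:u:]) g)"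
proof -
  define u where "u = lead_coeff B"
  have "B \<noteq> 0" using B n by auto
  then have "u \<noteq> 0" by (simp add: u_def)
  define c where "c = (coeff B (n - 2) / u - coeff A (n - 1)) / u"
  have htpc: "ratfun_naive_htpc n (A, B) (A + smult c B, B)"
    by (rule ratfun_naive_htpc_add_smult[OF f])
  have "u * coeff (A + smult c B) (n - 1) = coeff B (n - 2)"
    using \<open>u \<noteq> 0\<close> B by (simp add: c_def u_def field_simps)
  with ratfun_eq_oplusN_X[OF ratfun_naive_htpc_ratfun[OF htpc f] n B]
  obtain g where "g \<in> ratfun (n - 1)" "(A + smult c B, B) = oplusN ([:0, 1:], [:u:]) g"
    by (auto simp: u_def)
  with htpc \<open>u \<noteq> 0\<close> show ?thesis by metis
qed

lemma ratfun_eq_bezout_act_div: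
  fixes A B :: "'a::field poly"
  assumes f: "(A, B) \<in> ratfun n" and "B \<noteq> 0"
  defines "c \<equiv> lead_coeff B"
  shows "\<exists>Q g. lead_coeff Q = 1 \<and> degree Q = n - degree B \<and> g \<in> coprime_pairs (degree B)
               \<and> (A, B) = bezout_act Q [:c:] 0 [:1 / c:] g"
proof -
  obtain U V where monic: "lead_coeff A = 1" and A: "degree A = n" and B: "degree B < n"
    and bezout: "A * U + B * V = 1"
    using f unfolding ratfun_iff_bezout by blast
  have "c \<noteq> 0" using \<open>B \<noteq> 0\<close> by (simp add: c_def)
  define q where "q = A div B"
  define r where "r = A mod B"
  have Aqr: "A = q * B + r" by (simp add: q_def r_def)
  have r: "r = 0 \<or> degree r < degree B" using degree_mod_less[OF \<open>B \<noteq> 0\<close>] by (auto simp: r_def)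
  have "r = 0 \<or> degree r < degree (q * B)"
    using r A B Aqr by (cases "q = 0") (auto simp: degree_mult_eq \<open>B \<noteq> 0\<close>)
  then have "degree r < degree (q * B)" using A B Aqr by (cases "r = 0") auto
  then have "degree A = degree (q * B)" "lead_coeff A = lead_coeff (q * B)"
    unfolding Aqr using degree_add_eq_left lead_coeff_add_le[of r "q * B"] by (simp_all add: add.commute)
  then have "degree (q * B) = n" "lead_coeff (q * B) = 1" using A monic by simp_all
  then have lq: "lead_coeff q * c = 1" unfolding c_def by (metis lead_coeff_mult)
  then have "q \<noteq> 0" by auto
  then have "degree q = n - degree B"
    using degree_mult_eq[OF _ \<open>B \<noteq> 0\<close>] \<open>degree (q * B) = n\<close> by simp
  define A' where "A' = smult (1 / c) B"
  define B' where "B' = smult (- c) r"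
  have "A' * smult c (q * U + V) + B' * smult (- 1 / c) U = A * U + B * V"
    using \<open>c \<noteq> 0\<close> unfolding A'_def B'_def Aqr by (simp add: algebra_simps)
  then have "\<exists>U V. A' * U + B' * V = 1" using bezout by metis
  moreover have "lead_coeff A' = 1" "degree A' = degree B" "B' = 0 \<or> degree B' < degree B"
    using \<open>c \<noteq> 0\<close> r by (auto simp: A'_def B'_def c_def)
  ultimately have "(A', B') \<in> coprime_pairs (degree B)" by (simp add: coprime_pairs_def)
  moreover have "(A, B) = bezout_act (smult c q) [:c:] 0 [:1 / c:] (A', B')"
    using \<open>c \<noteq> 0\<close> Aqr by (simp add: bezout_act_def A'_def B'_def)
  moreover have "lead_coeff (smult c q) = 1" "degree (smult c q) = n - degree B"
    using lq \<open>degree q = n - degree B\<close> \<open>c \<noteq> 0\<close> by (simp_all add: mult.commute)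
  ultimately show ?thesis by blast
qed

lemma ratfun_naive_htpc_bezout_act_monom:
  fixes Q :: "'a::field poly"
  assumes monic: "lead_coeff Q = 1" and Q: "degree Q = d" and d: "0 < d" and "c \<noteq> 0"
    and g: "g \<in> coprime_pairs m"
  shows "ratfun_naive_htpc (d + m) (bezout_act Q [:c:] 0 [:1 / c:] g)
                                  (bezout_act (monom 1 d) [:c:] 0 [:1 / c:] g)"
proof -
  define R where "R = Q - monom 1 d"
  have "degree R \<le> d" "coeff R d = 0"
    using Q monic by (auto simp: R_def degree_monom_le intro!: degree_diff_le)
  then have "degree R < d" using d by (metis eq_zero_or_degree_less degree_0)
  define A where "A = const_T (monom 1 d) + smult [:0, 1:] (const_T R)"
  have small: "degree (smult [:0, 1:] (const_T R)) < d"
    using \<open>degree R < d\<close> degree_smult_le[of "[:0, 1:]" "const_T R"] by simp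
  then have "degree A = d" by (simp add: A_def degree_add_eq_left degree_monom_eq)
  moreover have "lead_coeff A = 1"
    using \<open>degree A = d\<close> coeff_eq_0[OF small] by (simp add: A_def one_pCons)
  ultimately have "bezout_mat d A [:[:c:]:] 0 [:[:1 / c:]:]"
    using d \<open>c \<noteq> 0\<close> by (simp add: bezout_mat_def one_pCons)
  from ratfun_elem_htpy_bezout_act_left[OF this g]
  show ?thesis by (intro ratfun_elem_htpy_imp_naive_htpc(2)) (simp add: A_def R_def hom_distribs)
qed

text \<open>The deformation stays in \<open>F\<^sub>e\<^sub>+\<^sub>2\<^sub>+\<^sub>m\<close> because
  \<open>X^(e+2) \<cdot> T^2 X^e / c^2 + (c + T X^(e+1)) \<cdot> (1/c - T X^(e+1) / c^2) = 1\<close> for all \<open>T\<close>.\<close>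
lemma ratfun_naive_htpc_bezout_act_raise:
  fixes c :: "'a::field"
  assumes "c \<noteq> 0" and g: "g \<in> coprime_pairs m"
  shows "ratfun_naive_htpc (e + 2 + m) (bezout_act (monom 1 (e + 2)) [:c:] 0 [:1 / c:] g)
     (bezout_act (monom 1 (e + 2)) ([:c:] + monom 1 (e + 1)) (monom (1 / c\<^sup>2) e)
                 ([:1 / c:] - monom (1 / c\<^sup>2) (e + 1)) g)"
proof -
  define A :: "'a poly poly" where "A = monom 1 (e + 2)"
  define B :: "'a poly poly" where "B = monom [:c:] 0 + monom [:0, 1:] (e + 1)"
  define U :: "'a poly poly" where "U = monom [:0, 0, 1 / c\<^sup>2:] e"
  define V :: "'a poly poly" where "V = monom [:1 / c:] 0 - monom [:0, 1 / c\<^sup>2:] (e + 1)"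
  have "A * U + B * V = monom ([:c:] * [:1 / c:]) 0
      + (monom ([:0, 1:] * [:1 / c:]) (e + 1) - monom ([:c:] * [:0, 1 / c\<^sup>2:]) (e + 1))
      + (monom [:0, 0, 1 / c\<^sup>2:] (e + e + 2) - monom ([:0, 1:] * [:0, 1 / c\<^sup>2:]) (e + e + 2))"
    by (simp add: A_def B_def U_def V_def algebra_simps mult_monom
        del: pCons_0_0 mult_pCons_left mult_pCons_right)
  also have "\<dots> = 1"
    using \<open>c \<noteq> 0\<close> by (simp add: monom_0 one_pCons power2_eq_square)
  finally have "A * U + B * V = 1" .
  moreover have "degree B \<le> e + 1" "degree U \<le> e" "degree V \<le> e + 1"
    unfolding B_def U_def V_def
    by (auto intro!: degree_add_le degree_diff_le order.trans[OF degree_monom_le])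
  ultimately have "bezout_mat (e + 2) A B U V" by (simp add: bezout_mat_def A_def degree_monom_eq)
  from ratfun_elem_htpy_bezout_act_left[OF this g]
  show ?thesis
    by (intro ratfun_elem_htpy_imp_naive_htpc(1)) (simp add: A_def B_def U_def V_def monom_0 hom_distribs)
qed

lemma degree_snd_bezout_act_raise:
  fixes c :: "'a::field"
  assumes g: "g \<in> coprime_pairs m"
  shows "degree (snd (bezout_act (monom 1 (e + 2)) ([:c:] + monom 1 (e + 1)) (monom (1 / c\<^sup>2) e) V g))
       = e + 1 + m"
proof -
  obtain A B where g_eq: "g = (A, B)" and monic: "lead_coeff A = 1" and A: "degree A = m"
    and B: "B = 0 \<or> degree B < m"
    using g by (cases g) (auto simp: coprime_pairs_def)
  have "degree ([:c:] + monom 1 (e + 1)) = e + 1" "lead_coeff ([:c:] + monom (1::'a) (e + 1)) = 1"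
    by (simp_all add: degree_add_eq_right lead_coeff_add_le degree_monom_eq)
  then have "degree (([:c:] + monom 1 (e + 1)) * A) = e + 1 + m"
    using monic A by (metis degree_mult_eq leading_coeff_0_iff one_neq_zero)
  moreover have "degree (monom (1 / c\<^sup>2) e * B) < e + 1 + m"
    using B degree_mult_le[of "monom (1 / c\<^sup>2) e" B] degree_monom_le[of "1 / c\<^sup>2" e] by auto
  ultimately show ?thesis by (simp add: g_eq bezout_act_def degree_add_eq_left)
qed

lemma ratfun_naive_htpc_full_degree_denom:
  fixes A B :: "'a::field poly"
  assumes f: "(A, B) \<in> ratfun n" and n: "2 \<le> n"
  shows "\<exists>g. ratfun_naive_htpc n (A, B) g \<and> degree (snd g) = n - 1"
proof (cases "degree B = n - 1")
  case False
  have B: "degree B < n" using f by (simp add: ratfun_iff_bezout)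
  have "B \<noteq> 0" by (rule ratfun_snd_nonzero[OF f])
  define c where "c = lead_coeff B"
  have "c \<noteq> 0" using \<open>B \<noteq> 0\<close> by (simp add: c_def)
  obtain Q g where Q: "lead_coeff Q = 1" "degree Q = n - degree B" and g: "g \<in> coprime_pairs (degree B)"
    and AB: "(A, B) = bezout_act Q [:c:] 0 [:1 / c:] g"
    using ratfun_eq_bezout_act_div[OF f \<open>B \<noteq> 0\<close>] unfolding c_def by blast
  define e where "e = n - degree B - 2"
  have n_eq: "n = e + 2 + degree B" and dQ: "degree Q = e + 2"
    using False B Q(2) by (simp_all add: e_def)
  define g' where "g' = bezout_act (monom 1 (e + 2)) ([:c:] + monom 1 (e + 1)) (monom (1 / c\<^sup>2) e)
                          ([:1 / c:] - monom (1 / c\<^sup>2) (e + 1)) g"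
  have "ratfun_naive_htpc n (A, B) (bezout_act (monom 1 (e + 2)) [:c:] 0 [:1 / c:] g)"
    using ratfun_naive_htpc_bezout_act_monom[OF Q(1) dQ _ \<open>c \<noteq> 0\<close> g] by (simp add: AB n_eq)
  also have "ratfun_naive_htpc n \<dots> g'"
    unfolding g'_def n_eq by (rule ratfun_naive_htpc_bezout_act_raise[OF \<open>c \<noteq> 0\<close> g])
  finally have "ratfun_naive_htpc n (A, B) g'" .
  moreover have "degree (snd g') = n - 1"
    using degree_snd_bezout_act_raise[OF g, of e c] n_eq by (simp add: g'_def)
  ultimately show ?thesis by blast
qed (use ratfun_naive_htpc_refl in fastforce)

lemma ratfun_naive_htpc_diag_ratfun_1:
  fixes A B :: "'a::field poly"
  assumes f: "(A, B) \<in> ratfun 1"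
  shows "\<exists>u. u \<noteq> 0 \<and> ratfun_naive_htpc 1 (A, B) (diag_ratfun [u])"
proof -
  have monic: "lead_coeff A = 1" and A: "degree A = 1" and B: "degree B < 1"
    using f unfolding ratfun_iff_bezout by blast+
  define a where "a = coeff A 0"
  define b where "b = coeff B 0"
  have B_eq: "B = [:b:]" using B unfolding b_def by (metis degree_0_id less_one)
  have A_eq: "A = [:a, 1:]"
  proof (rule poly_eqI)
    fix i
    show "coeff A i = coeff [:a, 1:] i"
      using monic A by (cases i) (auto simp: a_def coeff_pCons coeff_eq_0 split: nat.split)
  qed
  have "b \<noteq> 0" using ratfun_snd_nonzero[OF f] B_eq by auto
  have "ratfun_naive_htpc 1 (A, B) (A + smult (- a / b) B, B)"
    by (rule ratfun_naive_htpc_add_smult[OF f])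
  moreover have "(A + smult (- a / b) B, B) = diag_ratfun [b]"
    using \<open>b \<noteq> 0\<close> by (simp add: A_eq B_eq)
  ultimately show ?thesis using \<open>b \<noteq> 0\<close> by metis
qed

lemma ratfun_naive_htpc_diag_ratfun:
  fixes f :: "'a::field poly \<times> 'a poly"
  assumes "f \<in> ratfun (Suc m)"
  shows "\<exists>us. length us = Suc m \<and> (\<forall>u \<in> set us. u \<noteq> 0) \<and> ratfun_naive_htpc (Suc m) f (diag_ratfun us)"
  using assms
proof (induction m arbitrary: f)
  case 0
  then obtain u where "u \<noteq> 0" "ratfun_naive_htpc 1 f (diag_ratfun [u])"
    using ratfun_naive_htpc_diag_ratfun_1[of "fst f" "snd f"] by auto
  then show ?case by (intro exI[of _ "[u]"]) simp
next
  case (Suc m)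
  obtain A B where f: "f = (A, B)" by (cases f)
  obtain g where htpc1: "ratfun_naive_htpc (Suc (Suc m)) f g" and "degree (snd g) = Suc m"
    using ratfun_naive_htpc_full_degree_denom[of A B "Suc (Suc m)"] Suc.prems by (auto simp: f)
  moreover have "g \<in> ratfun (Suc (Suc m))" by (rule ratfun_naive_htpc_ratfun[OF htpc1 Suc.prems])
  ultimately obtain u g' where "u \<noteq> 0" "g' \<in> ratfun (Suc m)"
    and htpc2: "ratfun_naive_htpc (Suc (Suc m)) g (oplusN ([:0, 1:], [:u:]) g')"
    using ratfun_naive_htpc_oplusN_X[of "fst g" "snd g" "Suc (Suc m)"] by auto
  obtain us where us: "length us = Suc m" "\<forall>u \<in> set us. u \<noteq> 0"
    and htpc3: "ratfun_naive_htpc (Suc m) g' (diag_ratfun us)"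
    using Suc.IH[OF \<open>g' \<in> ratfun (Suc m)\<close>] by blast
  have "ratfun_naive_htpc (1 + Suc m) (oplusN ([:0, 1:], [:u:]) g') (oplusN ([:0, 1:], [:u:]) (diag_ratfun us))"
    unfolding oplusN_X[OF \<open>u \<noteq> 0\<close>]
    by (rule ratfun_naive_htpc_bezout_act_right[OF bezout_mat_X[OF \<open>u \<noteq> 0\<close>] htpc3])
  moreover have "diag_ratfun (u # us) = oplusN ([:0, 1:], [:u:]) (diag_ratfun us)"
    using us(1) by (cases us) auto
  ultimately have "ratfun_naive_htpc (Suc (Suc m)) f (diag_ratfun (u # us))"
    using htpc1 htpc2 by (auto intro: ratfun_naive_htpc_trans)
  then show ?case using us \<open>u \<noteq> 0\<close> by (intro exI[of _ "u # us"]) auto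
qed

theorem lemma3p14:
  fixes n :: nat
  assumes "n \<ge> 1"
  shows "(\<forall>S :: 'a::field mat. S \<in> sym_nondeg n \<longrightarrow>
            (\<exists>us. length us = n \<and> (\<forall>u \<in> set us. u \<noteq> 0) \<and>
                  sym_naive_htpc n S (diag_form us)))
       \<and> (\<forall>f :: 'a poly \<times> 'a poly. f \<in> ratfun n \<longrightarrow>
            (\<exists>us. length us = n \<and> (\<forall>u \<in> set us. u \<noteq> 0) \<and>
                  ratfun_naive_htpc n f (diag_ratfun us)))"
proof -
  obtain m where "n = Suc m" using assms by (cases n) auto
  then show ?thesis using sym_naive_htpc_diag_form ratfun_naive_htpc_diag_ratfun by blast
qed

end
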